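(* Let $M'$ be a matroid of rank $n$ on $[d]$, let $F$ be a flat of $M'$, and let $M=M'+_Fa$ be the principal extension on $[d]\cup\{a\}$. Let $\gamma=(\gamma_p)_{p\in[d]\cup\{a\}}\in V_{\mathcal{C}(M)}$ be a tuple of vectors in $\mathbb{C}^n$ such that the restriction $(\gamma_p)_{p\in[d]}$ lies in $V_{M'}$ and $\dim\operatorname{span}(\gamma_p:p\in F)=\operatorname{rank}_{M'}(F)$. Then $\gamma\in V_M$.
   Context: Principal extension: for $a\notin[d]$, $M'+_Fa$ is the matroid on $[d]\cup\{a\}$ with bases $\mathcal{B}(M')\cup\{(\lambda\setminus\{b\})\cup\{a\}:\lambda\in\mathcal{B}(M'),\ b\in\lambda\cap F\}$ (it has rank $n$). For a matroid $N$ of rank $n$ on a finite set $E$, a realization is a tuple $(\gamma_e)_{e\in E}$ in $\mathbb{C}^n$ with $(\gamma_e)_{e\in S}$ linearly dependent iff $S$ is dependent in $N$; the matroid variety $V_N$ is the Zariski closure of the set of realizations in $(\mathbb{C}^n)^E$; the circuit variety $V_{\mathcal{C}(N)}$ is the set of tuples with $(\gamma_e)_{e\in S}$ linearly dependent for every dependent set $S$ of $N$. *)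

theory Defs
  imports "HOL-Analysis.Analysis"
begin

definition matroid_bases :: "'a set \<Rightarrow> 'a set set \<Rightarrow> bool" where
  "matroid_bases E \<B> \<longleftrightarrow> finite E \<and> \<B> \<noteq> {} \<and> (\<forall>B\<in>\<B>. B \<subseteq> E) \<and>
     (\<forall>B1\<in>\<B>. \<forall>B2\<in>\<B>. \<forall>x\<in>B1 - B2. \<exists>y\<in>B2 - B1. insert y (B1 - {x}) \<in> \<B>)"

definition m_indep :: "'a set set \<Rightarrow> 'a set \<Rightarrow> bool" where
  "m_indep \<B> I \<longleftrightarrow> (\<exists>B\<in>\<B>. I \<subseteq> B)"

definition m_dep :: "'a set \<Rightarrow> 'a set set \<Rightarrow> 'a set \<Rightarrow> bool" where
  "m_dep E \<B> S \<longleftrightarrow> S \<subseteq> E \<and> \<not> m_indep \<B> S"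

definition m_rank :: "'a set set \<Rightarrow> 'a set \<Rightarrow> nat" where
  "m_rank \<B> X = Max (card ` {I. I \<subseteq> X \<and> m_indep \<B> I})"

definition matroid_rank_n :: "'a set \<Rightarrow> 'a set set \<Rightarrow> nat \<Rightarrow> bool" where
  "matroid_rank_n E \<B> n \<longleftrightarrow> matroid_bases E \<B> \<and> (\<forall>B\<in>\<B>. card B = n)"

definition m_flat :: "'a set \<Rightarrow> 'a set set \<Rightarrow> 'a set \<Rightarrow> bool" where
  "m_flat E \<B> F \<longleftrightarrow> F \<subseteq> E \<and> (\<forall>x\<in>E - F. m_rank \<B> (insert x F) > m_rank \<B> F)"

definition principal_ext_bases :: "'a set set \<Rightarrow> 'a set \<Rightarrow> 'a \<Rightarrow> 'a set set" where
  "principal_ext_bases \<B> F a =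
     \<B> \<union> {insert a (L - {b}) | L b. L \<in> \<B> \<and> b \<in> L \<inter> F}"

text \<open>A family (gamma_e) for e in S is linearly dependent over C (repetitions count).\<close>
definition fam_dependent :: "('a \<Rightarrow> complex ^ 'n) \<Rightarrow> 'a set \<Rightarrow> bool" where
  "fam_dependent \<gamma> S \<longleftrightarrow> \<not> (inj_on \<gamma> S \<and> \<not> vec.dependent (\<gamma> ` S))"

text \<open>Points of (C^n)^E are represented as extensional functions on E (value undefined outside E).\<close>
definition config_space :: "'a set \<Rightarrow> ('a \<Rightarrow> complex ^ 'n) set" where
  "config_space E = extensional E"

inductive_set poly_funs :: "'a set \<Rightarrow> (('a \<Rightarrow> complex ^ 'n) \<Rightarrow> complex) set"
  for E :: "'a set" where
  const: "(\<lambda>_. c) \<in> poly_funs E"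
| coord: "e \<in> E \<Longrightarrow> (\<lambda>\<gamma>. \<gamma> e $ i) \<in> poly_funs E"
| add: "p \<in> poly_funs E \<Longrightarrow> q \<in> poly_funs E \<Longrightarrow> (\<lambda>\<gamma>. p \<gamma> + q \<gamma>) \<in> poly_funs E"
| mult: "p \<in> poly_funs E \<Longrightarrow> q \<in> poly_funs E \<Longrightarrow> (\<lambda>\<gamma>. p \<gamma> * q \<gamma>) \<in> poly_funs E"

definition zariski_closed :: "'a set \<Rightarrow> ('a \<Rightarrow> complex ^ 'n) set \<Rightarrow> bool" where
  "zariski_closed E Z \<longleftrightarrow>
     (\<exists>P \<subseteq> poly_funs E. Z = {\<gamma> \<in> config_space E. \<forall>p\<in>P. p \<gamma> = 0})"

definition zariski_closure :: "'a set \<Rightarrow> ('a \<Rightarrow> complex ^ 'n) set \<Rightarrow> ('a \<Rightarrow> complex ^ 'n) set" where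
  "zariski_closure E S = \<Inter>{Z. zariski_closed E Z \<and> S \<subseteq> Z}"

definition is_realization :: "'a set \<Rightarrow> 'a set set \<Rightarrow> ('a \<Rightarrow> complex ^ 'n) \<Rightarrow> bool" where
  "is_realization E \<B> \<gamma> \<longleftrightarrow> \<gamma> \<in> config_space E \<and>
     (\<forall>S \<subseteq> E. fam_dependent \<gamma> S \<longleftrightarrow> m_dep E \<B> S)"

definition matroid_variety :: "'a set \<Rightarrow> 'a set set \<Rightarrow> ('a \<Rightarrow> complex ^ 'n) set" where
  "matroid_variety E \<B> = zariski_closure E {\<gamma>. is_realization E \<B> \<gamma>}"

definition circuit_variety :: "'a set \<Rightarrow> 'a set set \<Rightarrow> ('a \<Rightarrow> complex ^ 'n) set" where
  "circuit_variety E \<B> = {\<gamma> \<in> config_space E. \<forall>S. m_dep E \<B> S \<longrightarrow> fam_dependent \<gamma> S}"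

end

theory Submission
  imports Defs "HOL-Computational_Algebra.Polynomial"
begin

text \<open>
  Choose J \<subseteq> F indexing a basis of span(\<gamma>_p : p \<in> F). By the rank hypothesis J \<union> {a} is
  dependent in M, so the circuit conditions give \<gamma>_a = \<Sum>_{j \<in> J} c_j \<gamma>_j with fixed coefficients.
  Let p be a polynomial vanishing on all realizations of M and put q(\<delta>) = p(\<delta>, \<Sum>_{j \<in> J} c_j \<delta>_j).
  For a realization \<delta> of M', placing a generic vector of span(\<delta>_p : p \<in> F) on a gives a realization
  of M; on the line from \<Sum>_{j \<in> J} c_j \<delta>_j to a generic vector all but finitely many points are
  generic, so the univariate polynomial p restricted to that line vanishes and q(\<delta>) = 0. Thus q
  vanishes on V_M', in particular at the restriction of \<gamma>, which says p(\<gamma>) = 0.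
\<close>

lemma fam_dependent_cong:
  "(\<And>x. x \<in> S \<Longrightarrow> g x = h x) \<Longrightarrow> fam_dependent g S \<longleftrightarrow> fam_dependent h S"
  unfolding fam_dependent_def by (metis image_cong inj_on_cong)

lemma fam_dependent_insert:
  assumes "a \<notin> T"
  shows "fam_dependent g (insert a T) \<longleftrightarrow> fam_dependent g T \<or> g a \<in> vec.span (g ` T)"
proof -
  have "inj_on g (insert a T) \<longleftrightarrow> inj_on g T \<and> g a \<notin> g ` T"
    using assms by auto
  moreover have "inj_on g T \<Longrightarrow> g a \<notin> g ` T \<Longrightarrow>
      vec.dependent (g ` insert a T) \<longleftrightarrow> vec.dependent (g ` T) \<or> g a \<in> vec.span (g ` T)"
    using vec.independent_insert[of "g a" "g ` T"] by auto
  moreover have "g a \<in> g ` T \<Longrightarrow> g a \<in> vec.span (g ` T)"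
    by (simp add: vec.span_base)
  ultimately show ?thesis
    unfolding fam_dependent_def by blast
qed

lemma card_le_m_rank:
  assumes "finite X" "I \<subseteq> X" "m_indep \<B> I"
  shows "card I \<le> m_rank \<B> X"
proof -
  have "finite {I. I \<subseteq> X \<and> m_indep \<B> I}"
    using assms(1) by (simp add: finite_subset[of _ "Pow X"])
  then show ?thesis
    unfolding m_rank_def using assms(2,3) by (simp add: Max_ge)
qed

lemma m_indep_principal_ext:
  "a \<notin> S \<Longrightarrow> m_indep (principal_ext_bases \<B> F a) S \<longleftrightarrow> m_indep \<B> S"
  unfolding m_indep_def principal_ext_bases_def by blast

lemma principal_ext_bases_cases:
  assumes "L' \<in> principal_ext_bases \<B> F a"
  obtains "L' \<in> \<B>" | L b where "L \<in> \<B>" "b \<in> L \<inter> F" "L' = insert a (L - {b})"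
  using assms unfolding principal_ext_bases_def by blast

lemma m_indep_principal_ext_insert:
  assumes "a \<notin> T" "\<forall>L\<in>\<B>. a \<notin> L"
  shows "m_indep (principal_ext_bases \<B> F a) (insert a T) \<longleftrightarrow>
    (\<exists>L\<in>\<B>. \<exists>b\<in>L \<inter> F. T \<subseteq> L - {b})"
proof
  assume "m_indep (principal_ext_bases \<B> F a) (insert a T)"
  then obtain L' where L': "L' \<in> principal_ext_bases \<B> F a" "insert a T \<subseteq> L'"
    unfolding m_indep_def by blast
  from L'(1) show "\<exists>L\<in>\<B>. \<exists>b\<in>L \<inter> F. T \<subseteq> L - {b}"
    by (rule principal_ext_bases_cases) (use assms L'(2) in blast)+
next
  assume "\<exists>L\<in>\<B>. \<exists>b\<in>L \<inter> F. T \<subseteq> L - {b}"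
  then obtain L b where L: "L \<in> \<B>" "b \<in> L \<inter> F" "T \<subseteq> L - {b}"
    by blast
  then have "insert a (L - {b}) \<in> principal_ext_bases \<B> F a"
    unfolding principal_ext_bases_def by (intro UnI2 CollectI exI[of _ L] exI[of _ b]) auto
  with L(3) show "m_indep (principal_ext_bases \<B> F a) (insert a T)"
    unfolding m_indep_def by blast
qed

lemma m_dep_principal_ext_insert_rank:
  assumes "finite F" "J \<subseteq> F" "card J = m_rank \<B> F" "insert a F \<subseteq> E"
    and "a \<notin> F" "\<forall>L\<in>\<B>. a \<notin> L"
  shows "m_dep E (principal_ext_bases \<B> F a) (insert a J)"
  unfolding m_dep_def
proof
  show "insert a J \<subseteq> E" using assms(2,4) by blast
  show "\<not> m_indep (principal_ext_bases \<B> F a) (insert a J)"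
  proof
    assume "m_indep (principal_ext_bases \<B> F a) (insert a J)"
    then obtain L b where L: "L \<in> \<B>" "b \<in> L \<inter> F" "J \<subseteq> L - {b}"
      using m_indep_principal_ext_insert[of a J \<B> F] assms(2,5,6) by blast
    have "m_indep \<B> (insert b J)"
      unfolding m_indep_def using L by blast
    then have "card (insert b J) \<le> m_rank \<B> F"
      using L(2) assms(1,2) by (intro card_le_m_rank) auto
    moreover have "card (insert b J) = Suc (card J)"
      using L(3) finite_subset[OF assms(2,1)] by (simp add: subset_Diff_insert)
    ultimately show False using assms(3) by simp
  qed
qed

lemma finite_line_inter_subspace:
  fixes W :: "(complex ^ 'n) set"
  assumes W: "vec.subspace W" and "v \<notin> W \<or> w \<notin> W"
  shows "finite {t. v + t *s (w - v) \<in> W}"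
proof -
  have "t1 = t2" if t1: "v + t1 *s (w - v) \<in> W" and t2: "v + t2 *s (w - v) \<in> W" for t1 t2
  proof (rule ccontr)
    assume "t1 \<noteq> t2"
    have "(t1 - t2) *s (w - v) \<in> W"
      using vec.subspace_diff[OF W t1 t2] by (simp add: algebra_simps vec.scale_left_diff_distrib)
    then have "inverse (t1 - t2) *s ((t1 - t2) *s (w - v)) \<in> W"
      using W vec.subspace_scale by blast
    then have "w - v \<in> W"
      using \<open>t1 \<noteq> t2\<close> by (simp only: vec.scale_scale) simp
    then have "t1 *s (w - v) \<in> W"
      using W vec.subspace_scale by blast
    then have "v \<in> W"
      using t1 W vec.subspace_diff by fastforce
    moreover from this have "w \<in> W"
      using \<open>w - v \<in> W\<close> W vec.subspace_add by fastforce
    ultimately show False using assms(2) by blast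
  qed
  then obtain t0 where "{t. v + t *s (w - v) \<in> W} \<subseteq> {t0}"
    by blast
  then show ?thesis
    by (rule finite_subset) simp
qed

lemma subspace_not_covered_by_finite_subspaces:
  fixes U :: "(complex ^ 'n) set"
  assumes "finite \<W>" "vec.subspace U" "\<And>W. W \<in> \<W> \<Longrightarrow> vec.subspace W \<and> \<not> U \<subseteq> W"
  shows "\<exists>u\<in>U. u \<notin> \<Union>\<W>"
  using assms
proof (induction \<W> rule: finite_induct)
  case empty
  then show ?case using vec.subspace_0 by auto
next
  case (insert W \<W>)
  then obtain y where y: "y \<in> U" "y \<notin> \<Union>\<W>" by auto
  from insert obtain z where z: "z \<in> U" "z \<notin> W" by auto
  have "finite (\<Union>W'\<in>insert W \<W>. {t. y + t *s (z - y) \<in> W'})"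
    using insert y z by (intro finite_UN_I finite_line_inter_subspace) auto
  then obtain t where t: "t \<notin> (\<Union>W'\<in>insert W \<W>. {t. y + t *s (z - y) \<in> W'})"
    using ex_new_if_finite[OF infinite_UNIV_char_0] by blast
  have "y + t *s (z - y) \<in> U"
    using y z insert.prems(1) by (simp add: vec.subspace_add vec.subspace_diff vec.subspace_scale)
  with t show ?case by blast
qed

lemma poly_funs_sum:
  assumes "finite K" "\<And>k. k \<in> K \<Longrightarrow> f k \<in> poly_funs E"
  shows "(\<lambda>\<gamma>. \<Sum>k\<in>K. f k \<gamma>) \<in> poly_funs E"
  using assms
proof (induction K rule: finite_induct)
  case empty
  then show ?case using poly_funs.const[of 0 E] by simp
next
  case (insert k K)
  then show ?case using poly_funs.add[of "f k" E "\<lambda>\<gamma>. \<Sum>k\<in>K. f k \<gamma>"] by simp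
qed

lemma poly_funs_subst_sum:
  assumes "p \<in> poly_funs (insert a D)" "finite J" "J \<subseteq> D"
  shows "(\<lambda>\<delta>. p (\<delta>(a := \<Sum>j\<in>J. c j *s \<delta> j))) \<in> poly_funs D"
  using assms(1)
proof (induction rule: poly_funs.induct)
  case (const b)
  then show ?case by (rule poly_funs.const)
next
  case (coord e i)
  show ?case
  proof (cases "e = a")
    case True
    have "(\<lambda>\<delta>. c j * \<delta> j $ i) \<in> poly_funs D" if "j \<in> J" for j
      using that assms(3) by (intro poly_funs.mult[OF poly_funs.const poly_funs.coord]) auto
    then have "(\<lambda>\<delta>. \<Sum>j\<in>J. c j * \<delta> j $ i) \<in> poly_funs D"
      by (rule poly_funs_sum[OF assms(2)])
    with True show ?thesis by simp
  next
    case False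
    with coord have "e \<in> D" by simp
    with False show ?thesis using poly_funs.coord[of e D i] by simp
  qed
next
  case (add p q)
  then show ?case using poly_funs.add by blast
next
  case (mult p q)
  then show ?case using poly_funs.mult by blast
qed

lemma poly_funs_on_line:
  assumes "p \<in> poly_funs E"
  shows "\<exists>P. \<forall>t. p (\<lambda>e. \<gamma> e + t *s \<eta> e) = poly P t"
  using assms
proof (induction rule: poly_funs.induct)
  case (const c)
  show ?case by (intro exI[of _ "[:c:]"]) simp
next
  case (coord e i)
  show ?case by (intro exI[of _ "[:\<gamma> e $ i, \<eta> e $ i:]"]) (simp add: algebra_simps)
next
  case (add p q)
  then obtain P Q where "\<forall>t. p (\<lambda>e. \<gamma> e + t *s \<eta> e) = poly P t"
    and "\<forall>t. q (\<lambda>e. \<gamma> e + t *s \<eta> e) = poly Q t" by blast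
  then show ?case by (intro exI[of _ "P + Q"]) simp
next
  case (mult p q)
  then obtain P Q where "\<forall>t. p (\<lambda>e. \<gamma> e + t *s \<eta> e) = poly P t"
    and "\<forall>t. q (\<lambda>e. \<gamma> e + t *s \<eta> e) = poly Q t" by blast
  then show ?case by (intro exI[of _ "P * Q"]) simp
qed

lemma poly_funs_vanish_on_line:
  assumes "p \<in> poly_funs E" "finite X" "\<And>t. t \<notin> X \<Longrightarrow> p (\<lambda>e. \<gamma> e + t *s \<eta> e) = 0"
  shows "p \<gamma> = 0"
proof -
  obtain P where P: "\<And>t. p (\<lambda>e. \<gamma> e + t *s \<eta> e) = poly P t"
    using poly_funs_on_line[OF assms(1)] by blast
  have "P = 0"
  proof (rule ccontr)
    assume "P \<noteq> 0"
    then have "finite (X \<union> {t. poly P t = 0})"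
      using assms(2) poly_roots_finite by blast
    moreover have "X \<union> {t. poly P t = 0} = UNIV"
      using assms(3) P by auto
    ultimately show False
      using infinite_UNIV_char_0 by auto
  qed
  then show ?thesis
    using P[of 0] by simp
qed

lemma zariski_closure_poly_vanish:
  assumes "\<gamma> \<in> zariski_closure E S" "S \<subseteq> config_space E" "p \<in> poly_funs E" "\<forall>g\<in>S. p g = 0"
  shows "p \<gamma> = 0"
proof -
  have "zariski_closed E {g \<in> config_space E. p g = 0}"
    unfolding zariski_closed_def using assms(3) by (intro exI[of _ "{p}"]) auto
  moreover have "S \<subseteq> {g \<in> config_space E. p g = 0}"
    using assms(2,4) by blast
  ultimately show ?thesis
    using assms(1) unfolding zariski_closure_def by blast
qed

lemma zariski_closureI:
  assumes "\<gamma> \<in> config_space E" "\<And>p. p \<in> poly_funs E \<Longrightarrow> \<forall>g\<in>S. p g = 0 \<Longrightarrow> p \<gamma> = 0"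
  shows "\<gamma> \<in> zariski_closure E S"
  unfolding zariski_closure_def
proof (intro InterI, clarify)
  fix Z assume Z: "zariski_closed E Z" "S \<subseteq> Z"
  then obtain P where P: "P \<subseteq> poly_funs E" and Z_eq: "Z = {g \<in> config_space E. \<forall>p\<in>P. p g = 0}"
    unfolding zariski_closed_def by blast
  have "p \<gamma> = 0" if "p \<in> P" for p
  proof (rule assms(2))
    show "p \<in> poly_funs E"
      using P that by blast
    show "\<forall>g\<in>S. p g = 0"
      using Z(2) that unfolding Z_eq by blast
  qed
  with assms(1) show "\<gamma> \<in> Z"
    unfolding Z_eq by blast
qed

text \<open>Placed on the new element a, such vectors turn a realization of M' into one of M' +_F a.\<close>
definition generic_in_span :: "'a set \<Rightarrow> ('a \<Rightarrow> complex ^ 'n) \<Rightarrow> 'a set \<Rightarrow> complex ^ 'n \<Rightarrow> bool" where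
  "generic_in_span D \<delta> F v \<longleftrightarrow> (\<forall>S\<subseteq>D. v \<in> vec.span (\<delta> ` S) \<longleftrightarrow> \<delta> ` F \<subseteq> vec.span (\<delta> ` S))"

lemma generic_in_spanD:
  "generic_in_span D \<delta> F v \<Longrightarrow> S \<subseteq> D \<Longrightarrow> v \<in> vec.span (\<delta> ` S) \<longleftrightarrow> \<delta> ` F \<subseteq> vec.span (\<delta> ` S)"
  unfolding generic_in_span_def by blast

lemma generic_in_span_in_span:
  assumes "generic_in_span D \<delta> F v" "F \<subseteq> D"
  shows "v \<in> vec.span (\<delta> ` F)"
  using generic_in_spanD[OF assms] vec.span_superset by blast

lemma generic_in_span_exists:
  assumes "finite D" "F \<subseteq> D"
  shows "\<exists>w. generic_in_span D \<delta> F w"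
proof -
  let ?\<W> = "(\<lambda>S. vec.span (\<delta> ` S)) ` {S. S \<subseteq> D \<and> \<not> \<delta> ` F \<subseteq> vec.span (\<delta> ` S)}"
  have "finite {S. S \<subseteq> D \<and> \<not> \<delta> ` F \<subseteq> vec.span (\<delta> ` S)}"
    using assms(1) by (simp add: finite_subset[of _ "Pow D"])
  then have fin: "finite ?\<W>"
    by (rule finite_imageI)
  have sub: "vec.subspace W \<and> \<not> vec.span (\<delta> ` F) \<subseteq> W" if "W \<in> ?\<W>" for W
  proof -
    from that obtain S where "W = vec.span (\<delta> ` S)" "\<not> \<delta> ` F \<subseteq> vec.span (\<delta> ` S)"
      by blast
    then show ?thesis
      using vec.span_superset[of "\<delta> ` F"] vec.subspace_span by blast
  qed
  obtain w where w: "w \<in> vec.span (\<delta> ` F)" "w \<notin> \<Union>?\<W>"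
    using subspace_not_covered_by_finite_subspaces[OF fin vec.subspace_span sub] by blast
  have "generic_in_span D \<delta> F w"
    unfolding generic_in_span_def
  proof (intro allI impI iffI)
    fix S assume "S \<subseteq> D"
    show "\<delta> ` F \<subseteq> vec.span (\<delta> ` S)" if "w \<in> vec.span (\<delta> ` S)"
    proof (rule ccontr)
      assume "\<not> \<delta> ` F \<subseteq> vec.span (\<delta> ` S)"
      with \<open>S \<subseteq> D\<close> have "vec.span (\<delta> ` S) \<in> ?\<W>"
        by blast
      with that w(2) show False
        by blast
    qed
    show "w \<in> vec.span (\<delta> ` S)" if "\<delta> ` F \<subseteq> vec.span (\<delta> ` S)"
      using w(1) vec.span_minimal[OF that vec.subspace_span] by blast
  qed
  then show ?thesis ..
qed

lemma generic_in_span_on_line: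
  assumes "finite D" "F \<subseteq> D" "generic_in_span D \<delta> F w" "v \<in> vec.span (\<delta> ` F)"
  shows "finite {t. \<not> generic_in_span D \<delta> F (v + t *s (w - v))}"
proof -
  let ?Bad = "{S. S \<subseteq> D \<and> \<not> \<delta> ` F \<subseteq> vec.span (\<delta> ` S)}"
  have w: "w \<in> vec.span (\<delta> ` F)"
    using assms(3,2) by (rule generic_in_span_in_span)
  have "{t. \<not> generic_in_span D \<delta> F (v + t *s (w - v))} \<subseteq>
      (\<Union>S\<in>?Bad. {t. v + t *s (w - v) \<in> vec.span (\<delta> ` S)})"
  proof
    fix t assume "t \<in> {t. \<not> generic_in_span D \<delta> F (v + t *s (w - v))}"
    then obtain S where S: "S \<subseteq> D"
      and ne: "\<not> (v + t *s (w - v) \<in> vec.span (\<delta> ` S) \<longleftrightarrow> \<delta> ` F \<subseteq> vec.span (\<delta> ` S))"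
      unfolding generic_in_span_def by blast
    have "v + t *s (w - v) \<in> vec.span (\<delta> ` F)"
      using assms(4) w by (simp add: vec.span_add vec.span_diff vec.span_scale)
    then have "v + t *s (w - v) \<in> vec.span (\<delta> ` S)" if "\<delta> ` F \<subseteq> vec.span (\<delta> ` S)"
      using vec.span_minimal[OF that vec.subspace_span] by blast
    with S ne show "t \<in> (\<Union>S\<in>?Bad. {t. v + t *s (w - v) \<in> vec.span (\<delta> ` S)})"
      by blast
  qed
  moreover have "finite (\<Union>S\<in>?Bad. {t. v + t *s (w - v) \<in> vec.span (\<delta> ` S)})"
  proof (rule finite_UN_I)
    show "finite ?Bad"
      using assms(1) by (simp add: finite_subset[of _ "Pow D"])
    fix S assume "S \<in> ?Bad"
    then have "w \<notin> vec.span (\<delta> ` S)"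
      using generic_in_spanD[OF assms(3)] by blast
    then show "finite {t. v + t *s (w - v) \<in> vec.span (\<delta> ` S)}"
      using finite_line_inter_subspace[OF vec.subspace_span] by blast
  qed
  ultimately show ?thesis
    by (rule finite_subset)
qed

lemma realization_independent_not_spanning_iff:
  assumes "is_realization D \<B> \<delta>" "T \<subseteq> D" "F \<subseteq> D"
  shows "\<not> fam_dependent \<delta> T \<and> \<not> \<delta> ` F \<subseteq> vec.span (\<delta> ` T) \<longleftrightarrow>
    (\<exists>L\<in>\<B>. \<exists>b\<in>L \<inter> F. T \<subseteq> L - {b})"
proof -
  have "\<not> \<delta> ` F \<subseteq> vec.span (\<delta> ` T) \<longleftrightarrow> (\<exists>b\<in>F. b \<notin> T \<and> \<delta> b \<notin> vec.span (\<delta> ` T))"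
    unfolding image_subset_iff using vec.span_base by blast
  then have "\<not> fam_dependent \<delta> T \<and> \<not> \<delta> ` F \<subseteq> vec.span (\<delta> ` T) \<longleftrightarrow>
      (\<exists>b\<in>F. b \<notin> T \<and> \<not> fam_dependent \<delta> T \<and> \<delta> b \<notin> vec.span (\<delta> ` T))"
    by blast
  also have "\<dots> \<longleftrightarrow> (\<exists>b\<in>F. b \<notin> T \<and> \<not> fam_dependent \<delta> (insert b T))"
    by (rule bex_cong[OF refl]) (auto simp: fam_dependent_insert)
  also have "\<dots> \<longleftrightarrow> (\<exists>b\<in>F. b \<notin> T \<and> m_indep \<B> (insert b T))"
  proof (rule bex_cong[OF refl])
    fix b assume "b \<in> F"
    with assms(2,3) have "insert b T \<subseteq> D"
      by blast
    with assms(1) show "b \<notin> T \<and> \<not> fam_dependent \<delta> (insert b T) \<longleftrightarrow> b \<notin> T \<and> m_indep \<B> (insert b T)"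
      unfolding is_realization_def m_dep_def by blast
  qed
  also have "\<dots> \<longleftrightarrow> (\<exists>L\<in>\<B>. \<exists>b\<in>L \<inter> F. T \<subseteq> L - {b})"
    unfolding m_indep_def by blast
  finally show ?thesis .
qed

lemma is_realization_principal_ext:
  assumes real: "is_realization D \<B> \<delta>" and D: "a \<notin> D" "F \<subseteq> D" "\<forall>L\<in>\<B>. L \<subseteq> D"
    and v: "generic_in_span D \<delta> F v"
  shows "is_realization (insert a D) (principal_ext_bases \<B> F a) (\<delta>(a := v))"
  unfolding is_realization_def
proof (intro conjI allI impI)
  show "\<delta>(a := v) \<in> config_space (insert a D)"
    using real unfolding is_realization_def config_space_def extensional_def by auto
  fix S assume S: "S \<subseteq> insert a D"
  show "fam_dependent (\<delta>(a := v)) S \<longleftrightarrow> m_dep (insert a D) (principal_ext_bases \<B> F a) S"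
  proof (cases "a \<in> S")
    case False
    then have "fam_dependent (\<delta>(a := v)) S \<longleftrightarrow> fam_dependent \<delta> S"
      by (intro fam_dependent_cong) auto
    also have "\<dots> \<longleftrightarrow> m_dep D \<B> S"
      using real S False unfolding is_realization_def by blast
    also have "\<dots> \<longleftrightarrow> m_dep (insert a D) (principal_ext_bases \<B> F a) S"
      unfolding m_dep_def using m_indep_principal_ext[OF False] S False by blast
    finally show ?thesis .
  next
    case True
    define T where "T = S - {a}"
    have T: "S = insert a T" "a \<notin> T" "T \<subseteq> D"
      using True S unfolding T_def by auto
    have "fam_dependent (\<delta>(a := v)) S \<longleftrightarrow> fam_dependent \<delta> T \<or> v \<in> vec.span (\<delta> ` T)"
    proof -
      have "fam_dependent (\<delta>(a := v)) T \<longleftrightarrow> fam_dependent \<delta> T"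
        using T(2) by (intro fam_dependent_cong) auto
      moreover have "(\<delta>(a := v)) ` T = \<delta> ` T"
        using T(2) by auto
      ultimately show ?thesis
        using fam_dependent_insert[OF T(2), of "\<delta>(a := v)"] T(1) by simp
    qed
    also have "\<dots> \<longleftrightarrow> \<not> (\<not> fam_dependent \<delta> T \<and> \<not> \<delta> ` F \<subseteq> vec.span (\<delta> ` T))"
      using generic_in_spanD[OF v T(3)] by blast
    also have "\<dots> \<longleftrightarrow> \<not> (\<exists>L\<in>\<B>. \<exists>b\<in>L \<inter> F. T \<subseteq> L - {b})"
      using realization_independent_not_spanning_iff[OF real T(3) D(2)] by simp
    also have "\<dots> \<longleftrightarrow> \<not> m_indep (principal_ext_bases \<B> F a) (insert a T)"
      using m_indep_principal_ext_insert[OF T(2)] D(1,3) by blast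
    also have "\<dots> \<longleftrightarrow> m_dep (insert a D) (principal_ext_bases \<B> F a) S"
      unfolding m_dep_def using S T(1) by simp
    finally show ?thesis .
  qed
qed

lemma principal_ext_poly_vanish_on_span:
  assumes real: "is_realization D \<B> \<delta>" and D: "finite D" "a \<notin> D" "F \<subseteq> D" "\<forall>L\<in>\<B>. L \<subseteq> D"
    and p: "p \<in> poly_funs (insert a D)"
    and vanish: "\<And>g. is_realization (insert a D) (principal_ext_bases \<B> F a) g \<Longrightarrow> p g = 0"
    and v: "v \<in> vec.span (\<delta> ` F)"
  shows "p (\<delta>(a := v)) = 0"
proof -
  obtain w where w: "generic_in_span D \<delta> F w"
    using generic_in_span_exists D(1,3) by blast
  show ?thesis
  proof (rule poly_funs_vanish_on_line[where \<eta> = "(\<lambda>_. 0)(a := w - v)", OF p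
        generic_in_span_on_line[OF D(1,3) w v]])
    fix t assume "t \<notin> {t. \<not> generic_in_span D \<delta> F (v + t *s (w - v))}"
    then have "is_realization (insert a D) (principal_ext_bases \<B> F a) (\<delta>(a := v + t *s (w - v)))"
      using is_realization_principal_ext[OF real D(2-4)] by simp
    moreover have "(\<lambda>e. (\<delta>(a := v)) e + t *s ((\<lambda>_. 0)(a := w - v)) e) = \<delta>(a := v + t *s (w - v))"
      by (rule ext) simp
    ultimately show "p (\<lambda>e. (\<delta>(a := v)) e + t *s ((\<lambda>_. 0)(a := w - v)) e) = 0"
      using vanish by simp
  qed
qed

lemma matroid_variety_principal_extI:
  fixes \<gamma> :: "'a \<Rightarrow> complex ^ 'n"
  assumes D: "finite D" "a \<notin> D" "F \<subseteq> D" "\<forall>L\<in>\<B>. L \<subseteq> D"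
    and J: "J \<subseteq> F" and \<gamma>: "\<gamma> \<in> config_space (insert a D)" "\<gamma> a = (\<Sum>j\<in>J. c j *s \<gamma> j)"
    and restr: "restrict \<gamma> D \<in> matroid_variety D \<B>"
  shows "\<gamma> \<in> matroid_variety (insert a D) (principal_ext_bases \<B> F a)"
  unfolding matroid_variety_def
proof (rule zariski_closureI[OF \<gamma>(1)])
  fix p :: "('a \<Rightarrow> complex ^ 'n) \<Rightarrow> complex"
  assume p: "p \<in> poly_funs (insert a D)"
    and vanish_on: "\<forall>g\<in>{g. is_realization (insert a D) (principal_ext_bases \<B> F a) g}. p g = 0"
  have vanish: "\<And>g. is_realization (insert a D) (principal_ext_bases \<B> F a) g \<Longrightarrow> p g = 0"
    using vanish_on by simp
  define q :: "('a \<Rightarrow> complex ^ 'n) \<Rightarrow> complex" where "q \<delta> = p (\<delta>(a := \<Sum>j\<in>J. c j *s \<delta> j))" for \<delta>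
  have "finite J"
    using finite_subset[OF subset_trans[OF J D(3)] D(1)] .
  then have q: "q \<in> poly_funs D"
    unfolding q_def using J D(3) by (intro poly_funs_subst_sum[OF p]) auto
  have q_vanish: "\<forall>\<delta>\<in>{\<delta>. is_realization D \<B> \<delta>}. q \<delta> = 0"
  proof
    fix \<delta> :: "'a \<Rightarrow> complex ^ 'n"
    assume "\<delta> \<in> {\<delta>. is_realization D \<B> \<delta>}"
    then have real: "is_realization D \<B> \<delta>"
      by simp
    have "(\<Sum>j\<in>J. c j *s \<delta> j) \<in> vec.span (\<delta> ` F)"
      using J by (intro vec.span_sum vec.span_scale vec.span_base) auto
    from principal_ext_poly_vanish_on_span[OF real D p vanish this] show "q \<delta> = 0"
      by (simp add: q_def)
  qed
  have "{\<delta>. is_realization D \<B> \<delta>} \<subseteq> config_space D"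
    unfolding is_realization_def by blast
  from zariski_closure_poly_vanish[OF restr[unfolded matroid_variety_def] this q q_vanish]
  have "q (restrict \<gamma> D) = 0" .
  have \<gamma>_eq: "(restrict \<gamma> D)(a := \<Sum>j\<in>J. c j *s restrict \<gamma> D j) = \<gamma>"
  proof
    fix e
    have "(\<Sum>j\<in>J. c j *s restrict \<gamma> D j) = \<gamma> a"
      unfolding \<gamma>(2) using J D(3) by (intro sum.cong refl) auto
    then show "((restrict \<gamma> D)(a := \<Sum>j\<in>J. c j *s restrict \<gamma> D j)) e = \<gamma> e"
      using \<gamma>(1) unfolding config_space_def extensional_def by auto
  qed
  show "p \<gamma> = 0"
    using \<open>q (restrict \<gamma> D) = 0\<close> unfolding q_def \<gamma>_eq .
qed

lemma circuit_variety_principal_ext_in_span: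
  assumes D: "finite D" "a \<notin> D" "F \<subseteq> D" "\<forall>L\<in>\<B>. L \<subseteq> D"
    and \<gamma>: "\<gamma> \<in> circuit_variety (insert a D) (principal_ext_bases \<B> F a)"
    and dim: "vec.dim (\<gamma> ` F) = m_rank \<B> F"
  obtains J c where "J \<subseteq> F" "\<gamma> a = (\<Sum>j\<in>J. c j *s \<gamma> j)"
proof -
  obtain B where B: "B \<subseteq> \<gamma> ` F" "vec.independent B" "\<gamma> ` F \<subseteq> vec.span B"
    "card B = vec.dim (\<gamma> ` F)"
    by (rule vec.basis_exists)
  obtain J where J: "J \<subseteq> F" "inj_on \<gamma> J" "B = \<gamma> ` J"
    using B(1) subset_image_inj by metis
  have "finite F"
    using finite_subset[OF D(3,1)] .
  have "a \<notin> F" "insert a F \<subseteq> insert a D" "\<forall>L\<in>\<B>. a \<notin> L"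
    using D(2-4) by blast+
  have "card J = card B"
    using card_image[OF J(2)] J(3) by simp
  with B(4) dim have "card J = m_rank \<B> F"
    by simp
  from m_dep_principal_ext_insert_rank[OF \<open>finite F\<close> J(1) this \<open>insert a F \<subseteq> insert a D\<close>
      \<open>a \<notin> F\<close> \<open>\<forall>L\<in>\<B>. a \<notin> L\<close>]
  have "m_dep (insert a D) (principal_ext_bases \<B> F a) (insert a J)" .
  then have "fam_dependent \<gamma> (insert a J)"
    using \<gamma> unfolding circuit_variety_def by blast
  moreover have "\<not> fam_dependent \<gamma> J"
    using B(2) J(2,3) unfolding fam_dependent_def by simp
  moreover have "a \<notin> J"
    using J(1) \<open>a \<notin> F\<close> by blast
  ultimately have "\<gamma> a \<in> vec.span (\<gamma> ` J)"
    using fam_dependent_insert[OF \<open>a \<notin> J\<close>] by blast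
  moreover have "vec.span (\<gamma> ` J) = range (\<lambda>u. \<Sum>x\<in>\<gamma> ` J. u x *s x)"
    using finite_subset[OF J(1) \<open>finite F\<close>] by (intro vec.span_finite finite_imageI)
  ultimately obtain u where "\<gamma> a = (\<Sum>x\<in>\<gamma> ` J. u x *s x)"
    by auto
  then have "\<gamma> a = (\<Sum>j\<in>J. u (\<gamma> j) *s \<gamma> j)"
    using sum.reindex[OF J(2)] by simp
  with J(1) show thesis
    by (rule that)
qed

theorem lemma8p4:
  fixes d n :: nat and a :: nat and \<B>' :: "nat set set" and F :: "nat set"
    and \<gamma> :: "nat \<Rightarrow> complex ^ 'n"
  assumes "CARD('n) = n"
    and "matroid_rank_n {1..d} \<B>' n"
    and "m_flat {1..d} \<B>' F"
    and "a \<notin> {1..d}"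
    and "\<gamma> \<in> circuit_variety (insert a {1..d}) (principal_ext_bases \<B>' F a)"
    and "restrict \<gamma> {1..d} \<in> matroid_variety {1..d} \<B>'"
    and "vec.dim (\<gamma> ` F) = m_rank \<B>' F"
  shows "\<gamma> \<in> matroid_variety (insert a {1..d}) (principal_ext_bases \<B>' F a)"
proof -
  \<comment> \<open>Neither flatness of F nor the value of the rank n is needed; only \<open>F \<subseteq> {1..d}\<close> is used.\<close>
  have "\<forall>L\<in>\<B>'. L \<subseteq> {1..d}"
    using assms(2) unfolding matroid_rank_n_def matroid_bases_def by blast
  moreover have "F \<subseteq> {1..d}"
    using assms(3) unfolding m_flat_def by blast
  ultimately have D: "finite {1..d}" "a \<notin> {1..d}" "F \<subseteq> {1..d}" "\<forall>L\<in>\<B>'. L \<subseteq> {1..d}"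
    using assms(4) by simp_all
  obtain J c where J: "J \<subseteq> F" "\<gamma> a = (\<Sum>j\<in>J. c j *s \<gamma> j)"
    using circuit_variety_principal_ext_in_span[OF D assms(5,7)] by blast
  have "\<gamma> \<in> config_space (insert a {1..d})"
    using assms(5) unfolding circuit_variety_def by blast
  from matroid_variety_principal_extI[OF D J(1) this J(2) assms(6)] show ?thesis .
qed

end
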